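(* Let $r\geq 0$ be an integer and, for each integer $n\geq 0$, let $D_r(n)$ denote the number of $r$-derangements of $n+r$ elements (equivalently, $D_r(n)$ is defined by the exponential generating function $\sum_{n\geq 0} D_r(n)\frac{x^n}{n!}=\frac{x^r e^{-x}}{(1-x)^{r+1}}$; in particular $D_r(n)=0$ for $n<r$ and $D_r(n)=\sum_{j=r}^{n}(-1)^{n-j}\binom{j}{r}\frac{n!}{(n-j)!}$ for $n\geq r$). Then for every integer $n\geq r$, \[ \sum_{k=0}^{n}\binom{n}{k}\,D_r(k)=n!\binom{n}{r}. \]
   Context: An $r$-derangement of $n+r$ elements is a permutation of $\{1,\dots,n+r\}$ with no fixed points (every cycle in its cycle decomposition has length at least $2$) in which the first $r$ elements $1,\dots,r$ all lie in distinct cycles. $D_r(n)$ denotes the number of such permutations, and its exponential generating function is $\sum_{n\geq 0} D_r(n)\frac{x^n}{n!}=\frac{x^r e^{-x}}{(1-x)^{r+1}}$. For $r=0$, $D_0(n)$ is the usual number of derangements of $n$ elements. *)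

theory Defs
  imports "HOL-Combinatorics.Permutations"
begin

text \<open>r-derangements of the n+r elements 1..n+r: permutations with no fixed points
  in which 1..r lie in pairwise distinct cycles (no element of 1..r lies in the
  orbit of another).\<close>
definition r_derangements :: "nat \<Rightarrow> nat \<Rightarrow> (nat \<Rightarrow> nat) set" where
  "r_derangements r n =
     {p. p permutes {1..n+r}
         \<and> (\<forall>x\<in>{1..n+r}. p x \<noteq> x)
         \<and> (\<forall>i\<in>{1..r}. \<forall>j\<in>{1..r}. i \<noteq> j \<longrightarrow> (\<forall>k::nat. (p ^^ k) i \<noteq> j))}"

definition D :: "nat \<Rightarrow> nat \<Rightarrow> nat" where
  "D r n = card (r_derangements r n)"

end

(* Deleting a non-special element m from its cycle, p \<mapsto> (p m, m) \<circ> p, is a bijection onto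
   pairs (a, q) with a = p m. If the cycle of m had length at least 3, q is an r-derangement of
   the remaining elements; if it was the 2-cycle (a m), q fixes a and is an r-derangement of the
   elements other than a and m. Counting the choices of a gives
   D_s(n+1) = (s+n) D_s(n) + s D_{s-1}(n) + n D_s(n-1).
   For the binomial transform H_s(n) = \<Sum>_k C(n,k) D_s(k) this becomes
   H_s(n+1) = (s+n+1) H_s(n) + s H_{s-1}(n), which n! C(n,s) satisfies as well. *)

theory Submission
  imports Defs
begin

definition reaches :: "('a \<Rightarrow> 'a) \<Rightarrow> 'a \<Rightarrow> 'a \<Rightarrow> bool" where
  "reaches f x y \<longleftrightarrow> (\<exists>k. (f ^^ k) x = y)"

lemma reaches_refl [simp]: "reaches f x x"
  unfolding reaches_def by (metis funpow_0)

lemma reaches_step: "reaches f x y \<Longrightarrow> reaches f x (f y)"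
  unfolding reaches_def by (metis comp_apply funpow.simps(2))

lemma reaches_trans: "reaches f x y \<Longrightarrow> reaches f y z \<Longrightarrow> reaches f x z"
  unfolding reaches_def by (metis comp_apply funpow_add)

lemma reaches_map:
  assumes step: "\<And>z. reaches g (h z) (h (f z))" and "reaches f x y"
  shows "reaches g (h x) (h y)"
proof -
  have "reaches g (h x) (h ((f ^^ k) x))" for k
    by (induction k) (auto intro: reaches_trans step)
  then show ?thesis using \<open>reaches f x y\<close> unfolding reaches_def[of f] by blast
qed

lemma reaches_from_fixpoint:
  assumes "f a = a"
  shows "reaches f a y \<longleftrightarrow> y = a"
proof -
  have "(f ^^ k) a = a" for k
    using assms by (induction k) auto
  then show ?thesis unfolding reaches_def by auto
qed

lemma reaches_to_fixpoint:
  assumes "f a = a" "inj f"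
  shows "reaches f x a \<longleftrightarrow> x = a"
proof
  assume "reaches f x a"
  then obtain k where "(f ^^ k) x = a" unfolding reaches_def by blast
  then show "x = a"
    by (induction k arbitrary: x) (use assms in \<open>auto simp: funpow_Suc_right inj_eq simp del: funpow.simps\<close>)
qed simp

lemma transpose_comp_fixpoint_iff:
  assumes "q m = m" "inj q" "a \<noteq> m"
  shows "(Transposition.transpose a m \<circ> q) x = x \<longleftrightarrow> x \<noteq> a \<and> x \<noteq> m \<and> q x = x"
  using assms by (cases "x = m") (auto simp: transpose_def inj_eq)

lemma reaches_transpose_comp_iff:
  assumes "q m = m" "inj q" "a \<noteq> m" "x \<noteq> m" "y \<noteq> m"
  shows "reaches (Transposition.transpose a m \<circ> q) x y \<longleftrightarrow> reaches q x y"
proof -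
  define p where "p = Transposition.transpose a m \<circ> q"
  have qz: "q z \<noteq> m" if "z \<noteq> m" for z
    using that assms(1,2) by (metis injD)
  define h where "h z = (if z = m then a else z)" for z
  \<comment> \<open>Identifying m with its image a under p, every p-step is a q-step or no step at all.\<close>
  have "reaches q (h z) (h (p z))" for z
    using qz[of z] assms(1,3) reaches_step[OF reaches_refl, of q]
    by (cases "z = m"; cases "q z = a") (auto simp: p_def h_def)
  then have "reaches p x y \<Longrightarrow> reaches q x y"
    using reaches_map[of q h p x y] assms(4,5) by (simp add: h_def)
  moreover have "reaches p z (q z)" for z
  proof -
    consider "z = m" | "z \<noteq> m" "q z \<noteq> a" | "z \<noteq> m" "q z = a" by blast
    then show ?thesis
    proof cases
      case 1
      then show ?thesis using assms(1) by simp
    next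
      case 2
      then have "p z = q z" using qz[of z] by (simp add: p_def)
      then show ?thesis by (metis reaches_refl reaches_step)
    next
      case 3
      then have "p z = m" "p m = a" using assms(1) by (simp_all add: p_def)
      then show ?thesis using 3 by (metis reaches_refl reaches_step)
    qed
  qed
  then have "reaches q x y \<Longrightarrow> reaches p x y"
    using reaches_map[of p "\<lambda>z. z" q x y] by simp
  ultimately show ?thesis unfolding p_def by blast
qed

definition in_distinct_cycles :: "('a \<Rightarrow> 'a) \<Rightarrow> 'a set \<Rightarrow> bool" where
  "in_distinct_cycles p S \<longleftrightarrow> (\<forall>i\<in>S. \<forall>j\<in>S. i \<noteq> j \<longrightarrow> \<not> reaches p i j)"

lemma in_distinct_cycles_insert_fixpoint:
  assumes "in_distinct_cycles p S" "p a = a" "inj p"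
  shows "in_distinct_cycles p (insert a S)"
  using assms reaches_from_fixpoint[of p a] reaches_to_fixpoint[of p a]
  unfolding in_distinct_cycles_def by auto

definition r_derangements_on :: "'a set \<Rightarrow> 'a set \<Rightarrow> ('a \<Rightarrow> 'a) set" where
  "r_derangements_on S N =
     {p. p permutes S \<union> N \<and> (\<forall>x\<in>S \<union> N. p x \<noteq> x) \<and> in_distinct_cycles p S}"

lemma r_derangements_eq_r_derangements_on:
  "r_derangements r n = r_derangements_on {1..r} {r+1..n+r}"
proof -
  have "{1..r} \<union> {r+1..n+r} = {1..n+r}" by auto
  then show ?thesis
    unfolding r_derangements_def r_derangements_on_def in_distinct_cycles_def reaches_def by auto
qed

lemma finite_r_derangements_on:
  "finite S \<Longrightarrow> finite N \<Longrightarrow> finite (r_derangements_on S N)"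
  by (rule finite_subset[of _ "{p. p permutes S \<union> N}"])
     (auto simp: r_derangements_on_def intro: finite_permutations)

lemma r_derangements_on_empty:
  "r_derangements_on S {} = (if S = {} then {id} else {})"
proof (cases "S = {}")
  case True
  then show ?thesis by (auto simp: r_derangements_on_def in_distinct_cycles_def)
next
  case False
  then obtain s where s: "s \<in> S" by blast
  have "p \<notin> r_derangements_on S {}" for p
  proof
    assume p: "p \<in> r_derangements_on S {}"
    then have "p s \<in> S" "p s \<noteq> s"
      using s permutes_in_image[of p S s] by (auto simp: r_derangements_on_def)
    moreover have "reaches p s (p s)"
      by (rule reaches_step[OF reaches_refl])
    ultimately show False
      using p s by (auto simp: r_derangements_on_def in_distinct_cycles_def)
  qed
  then show ?thesis using False by auto
qed

lemma r_derangements_on_Un_delete_iff: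
  assumes "a \<in> S \<union> N"
  shows "q \<in> r_derangements_on S N \<union> r_derangements_on (S - {a}) (N - {a}) \<longleftrightarrow>
    q permutes S \<union> N \<and> (\<forall>x\<in>S \<union> N. q x = x \<longrightarrow> x = a) \<and> in_distinct_cycles q S"
    (is "_ \<longleftrightarrow> ?perm \<and> ?fix \<and> ?cyc")
proof
  assume "q \<in> r_derangements_on S N \<union> r_derangements_on (S - {a}) (N - {a})"
  then show "?perm \<and> ?fix \<and> ?cyc"
  proof
    assume "q \<in> r_derangements_on S N"
    then show ?thesis by (auto simp: r_derangements_on_def)
  next
    assume q: "q \<in> r_derangements_on (S - {a}) (N - {a})"
    then have perm: "q permutes S \<union> N - {a}"
      by (simp add: r_derangements_on_def Un_Diff)
    then have qa: "q a = a" by (simp add: permutes_not_in)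
    have "in_distinct_cycles q (insert a (S - {a}))"
      using q qa permutes_inj[OF perm]
      by (intro in_distinct_cycles_insert_fixpoint) (simp_all add: r_derangements_on_def)
    then have ?cyc unfolding in_distinct_cycles_def by blast
    moreover have ?fix using q by (auto simp: r_derangements_on_def)
    moreover have ?perm using perm by (rule permutes_subset) auto
    ultimately show ?thesis by blast
  qed
next
  assume "?perm \<and> ?fix \<and> ?cyc"
  then have perm: ?perm and fixed: ?fix and cyc: ?cyc by simp_all
  show "q \<in> r_derangements_on S N \<union> r_derangements_on (S - {a}) (N - {a})"
  proof (cases "q a = a")
    case True
    have "q permutes S - {a} \<union> (N - {a})"
      by (rule permutes_superset[OF perm]) (use True in auto)
    moreover have "\<forall>x\<in>S - {a} \<union> (N - {a}). q x \<noteq> x" using fixed by blast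
    moreover have "in_distinct_cycles q (S - {a})" using cyc by (simp add: in_distinct_cycles_def)
    ultimately show ?thesis by (simp add: r_derangements_on_def)
  next
    case False
    then have "q \<in> r_derangements_on S N"
      using perm fixed cyc by (auto simp: r_derangements_on_def)
    then show ?thesis by blast
  qed
qed

lemma r_derangements_on_Int_delete:
  assumes "a \<in> S \<union> N"
  shows "r_derangements_on S N \<inter> r_derangements_on (S - {a}) (N - {a}) = {}"
proof -
  have "q a \<noteq> a" if "q \<in> r_derangements_on S N" for q
    using that assms by (simp add: r_derangements_on_def)
  moreover have "q a = a" if "q \<in> r_derangements_on (S - {a}) (N - {a})" for q
    by (rule permutes_not_in[of q "S - {a} \<union> (N - {a})"])
      (use that in \<open>simp_all add: r_derangements_on_def\<close>)
  ultimately show ?thesis by blast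
qed

lemma transpose_comp_in_r_derangements_on_iff:
  assumes m: "m \<notin> S \<union> N" and a: "a \<in> S \<union> N" and q: "q permutes S \<union> N"
  shows "Transposition.transpose a m \<circ> q \<in> r_derangements_on S (insert m N) \<longleftrightarrow>
    (\<forall>x\<in>S \<union> N. q x = x \<longrightarrow> x = a) \<and> in_distinct_cycles q S"
proof -
  let ?p = "Transposition.transpose a m \<circ> q"
  have qm: "q m = m" using q m by (simp add: permutes_not_in)
  have inj: "inj q" using q by (rule permutes_inj)
  have am: "a \<noteq> m" using a m by blast
  have "q permutes S \<union> insert m N" using q by (rule permutes_subset) blast
  moreover have "Transposition.transpose a m permutes S \<union> insert m N"
    using a by (intro permutes_swap_id) auto
  ultimately have perm: "?p permutes S \<union> insert m N" by (rule permutes_compose)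
  have fixed: "(\<forall>x\<in>S \<union> insert m N. ?p x \<noteq> x) \<longleftrightarrow> (\<forall>x\<in>S \<union> N. q x = x \<longrightarrow> x = a)"
    unfolding transpose_comp_fixpoint_iff[OF qm inj am] using m by blast
  have "reaches ?p i j \<longleftrightarrow> reaches q i j" if "i \<in> S" "j \<in> S" for i j
    using m that by (intro reaches_transpose_comp_iff[OF qm inj am]) auto
  then have cyc: "in_distinct_cycles ?p S \<longleftrightarrow> in_distinct_cycles q S"
    unfolding in_distinct_cycles_def by blast
  show ?thesis
    unfolding r_derangements_on_def mem_Collect_eq by (simp only: perm fixed cyc simp_thms)
qed

lemma r_derangements_on_insert:
  assumes m: "m \<notin> S \<union> N"
  shows "r_derangements_on S (insert m N) =
    (\<Union>a\<in>S \<union> N. (\<circ>) (Transposition.transpose a m) `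
       (r_derangements_on S N \<union> r_derangements_on (S - {a}) (N - {a})))"
proof (intro equalityI subsetI)
  fix p assume p: "p \<in> r_derangements_on S (insert m N)"
  define a where "a = p m"
  define q where "q = Transposition.transpose a m \<circ> p"
  have perm: "p permutes S \<union> insert m N" using p by (simp add: r_derangements_on_def)
  have "\<forall>x\<in>S \<union> insert m N. p x \<noteq> x" using p by (simp add: r_derangements_on_def)
  then have a: "a \<in> S \<union> N"
    using permutes_in_image[OF perm, of m] by (auto simp: a_def)
  have pq: "p = Transposition.transpose a m \<circ> q"
    by (simp add: q_def comp_assoc[symmetric])
  have "q permutes S \<union> insert m N"
    unfolding q_def by (rule permutes_compose[OF perm permutes_swap_id]) (use a in blast)+
  then have "q permutes S \<union> N"
    by (rule permutes_superset) (auto simp: q_def a_def)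
  moreover note p[unfolded pq transpose_comp_in_r_derangements_on_iff[OF m a this]]
  ultimately have "q \<in> r_derangements_on S N \<union> r_derangements_on (S - {a}) (N - {a})"
    unfolding r_derangements_on_Un_delete_iff[OF a] by blast
  then show "p \<in> (\<Union>a\<in>S \<union> N. (\<circ>) (Transposition.transpose a m) `
       (r_derangements_on S N \<union> r_derangements_on (S - {a}) (N - {a})))"
    using a pq by blast
next
  fix p assume "p \<in> (\<Union>a\<in>S \<union> N. (\<circ>) (Transposition.transpose a m) `
       (r_derangements_on S N \<union> r_derangements_on (S - {a}) (N - {a})))"
  then obtain a q where a: "a \<in> S \<union> N" and p: "p = Transposition.transpose a m \<circ> q"
    and q: "q \<in> r_derangements_on S N \<union> r_derangements_on (S - {a}) (N - {a})"
    by blast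
  from q have "q permutes S \<union> N" "(\<forall>x\<in>S \<union> N. q x = x \<longrightarrow> x = a) \<and> in_distinct_cycles q S"
    unfolding r_derangements_on_Un_delete_iff[OF a] by simp_all
  then show "p \<in> r_derangements_on S (insert m N)"
    unfolding p by (simp add: transpose_comp_in_r_derangements_on_iff[OF m a])
qed

lemma card_r_derangements_on_insert:
  assumes fin: "finite S" "finite N" and m: "m \<notin> S \<union> N"
  shows "card (r_derangements_on S (insert m N)) =
    (\<Sum>a\<in>S \<union> N. card (r_derangements_on S N) + card (r_derangements_on (S - {a}) (N - {a})))"
proof -
  define Q where "Q a = r_derangements_on S N \<union> r_derangements_on (S - {a}) (N - {a})" for a
  have finite_Q: "finite (Q a)" for a
    using fin by (simp add: Q_def finite_r_derangements_on)
  have image_at_m: "p m = a"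
    if p_image: "p \<in> (\<circ>) (Transposition.transpose a m) ` Q a" and a: "a \<in> S \<union> N" for p a
  proof -
    obtain q where q: "q \<in> Q a" and p: "p = Transposition.transpose a m \<circ> q"
      using p_image by blast
    have "q permutes S \<union> N"
      using q unfolding Q_def r_derangements_on_Un_delete_iff[OF a] by simp
    then show ?thesis using m p by (simp add: permutes_not_in)
  qed
  have inj: "inj ((\<circ>) (Transposition.transpose a m))" for a
    by (rule injI) (metis comp_assoc transpose_comp_involutory comp_id id_comp)
  have card_image_Q: "card ((\<circ>) (Transposition.transpose a m) ` Q a) = card (Q a)" for a
    by (rule card_image[OF inj_on_subset[OF inj subset_UNIV]])
  have "card (r_derangements_on S (insert m N)) =
      (\<Sum>a\<in>S \<union> N. card ((\<circ>) (Transposition.transpose a m) ` Q a))"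
    unfolding r_derangements_on_insert[OF m] Q_def[symmetric]
  proof (rule card_UN_disjoint)
    show "\<forall>a\<in>S \<union> N. \<forall>b\<in>S \<union> N. a \<noteq> b \<longrightarrow>
        (\<circ>) (Transposition.transpose a m) ` Q a \<inter> (\<circ>) (Transposition.transpose b m) ` Q b = {}"
      using image_at_m by (metis disjoint_iff)
  qed (use fin finite_Q in simp_all)
  also have "\<dots> = (\<Sum>a\<in>S \<union> N. card (Q a))"
    by (simp only: card_image_Q)
  also have "\<dots> = (\<Sum>a\<in>S \<union> N. card (r_derangements_on S N) + card (r_derangements_on (S - {a}) (N - {a})))"
  proof (rule sum.cong)
    fix a assume a: "a \<in> S \<union> N"
    show "card (Q a) = card (r_derangements_on S N) + card (r_derangements_on (S - {a}) (N - {a}))"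
      unfolding Q_def using fin r_derangements_on_Int_delete[OF a]
      by (simp add: card_Un_disjoint finite_r_derangements_on)
  qed simp
  finally show ?thesis .
qed

lemma card_r_derangements_on_insert_disjoint:
  assumes fin: "finite S" "finite N" and m: "m \<notin> S \<union> N" and disj: "S \<inter> N = {}"
  shows "card (r_derangements_on S (insert m N)) = (card S + card N) * card (r_derangements_on S N)
    + (\<Sum>a\<in>S. card (r_derangements_on (S - {a}) N)) + (\<Sum>a\<in>N. card (r_derangements_on S (N - {a})))"
proof -
  have "card (r_derangements_on S (insert m N)) =
      (\<Sum>a\<in>S. card (r_derangements_on S N) + card (r_derangements_on (S - {a}) (N - {a})))
    + (\<Sum>a\<in>N. card (r_derangements_on S N) + card (r_derangements_on (S - {a}) (N - {a})))"
    unfolding card_r_derangements_on_insert[OF fin m] using fin disj by (rule sum.union_disjoint)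
  also have "\<dots> = (\<Sum>a\<in>S. card (r_derangements_on S N) + card (r_derangements_on (S - {a}) N))
    + (\<Sum>a\<in>N. card (r_derangements_on S N) + card (r_derangements_on S (N - {a})))"
  proof -
    have "N - {a} = N" if "a \<in> S" for a using that disj by blast
    moreover have "S - {a} = S" if "a \<in> N" for a using that disj by blast
    ultimately show ?thesis by (intro arg_cong2[where f = "(+)"] sum.cong) simp_all
  qed
  also have "\<dots> = (card S + card N) * card (r_derangements_on S N)
    + (\<Sum>a\<in>S. card (r_derangements_on (S - {a}) N)) + (\<Sum>a\<in>N. card (r_derangements_on S (N - {a})))"
    by (simp add: sum.distrib algebra_simps)
  finally show ?thesis .
qed

fun r_derangement_number :: "nat \<Rightarrow> nat \<Rightarrow> nat" where
  "r_derangement_number s 0 = (if s = 0 then 1 else 0)"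
| "r_derangement_number s (Suc n) =
     (s + n) * r_derangement_number s n + s * r_derangement_number (s - 1) n
     + n * r_derangement_number s (n - 1)"

lemma card_r_derangements_on:
  assumes "finite S" "finite N" "S \<inter> N = {}"
  shows "card (r_derangements_on S N) = r_derangement_number (card S) (card N)"
  using assms
proof (induction "card N" arbitrary: S N rule: less_induct)
  case less
  show ?case
  proof (cases "N = {}")
    case True
    then show ?thesis using less.prems by (simp add: r_derangements_on_empty)
  next
    case False
    then obtain m N' where N: "N = insert m N'" and "m \<notin> N'"
      by (metis all_not_in_conv mk_disjoint_insert)
    define s n where "s = card S" and "n = card N'"
    have fin: "finite N'" using less.prems N by simp
    have m: "m \<notin> S \<union> N'" and disj: "S \<inter> N' = {}" using less.prems N \<open>m \<notin> N'\<close> by blast+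
    have card_N: "card N = Suc n" using fin N \<open>m \<notin> N'\<close> by (simp add: n_def)
    have IH: "card (r_derangements_on S' N'') = r_derangement_number (card S') (card N'')"
      if "finite S'" "N'' \<subseteq> N'" "S' \<inter> N'' = {}" for S' N''
    proof (rule less.hyps)
      show "card N'' < card N" using card_mono[OF fin \<open>N'' \<subseteq> N'\<close>] card_N n_def by simp
    qed (use that fin finite_subset in auto)
    have "card (r_derangements_on (S - {a}) N') = r_derangement_number (s - 1) n" if "a \<in> S" for a
      using IH[of "S - {a}" N'] that less.prems(1) disj by (auto simp: s_def n_def)
    moreover have "card (r_derangements_on S (N' - {a})) = r_derangement_number s (n - 1)"
      if "a \<in> N'" for a
      using IH[of S "N' - {a}"] that less.prems(1) fin disj by (auto simp: s_def n_def)
    ultimately have "card (r_derangements_on S N) = (s + n) * r_derangement_number s n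
        + s * r_derangement_number (s - 1) n + n * r_derangement_number s (n - 1)"
      unfolding N card_r_derangements_on_insert_disjoint[OF less.prems(1) fin m disj]
      using IH[of S N'] less.prems(1) disj by (simp add: s_def n_def)
    then show ?thesis by (simp add: card_N s_def n_def algebra_simps)
  qed
qed

definition binomial_transform :: "(nat \<Rightarrow> nat) \<Rightarrow> nat \<Rightarrow> nat" where
  "binomial_transform g n = (\<Sum>k\<le>n. (n choose k) * g k)"

lemma binomial_transform_Suc:
  "binomial_transform g (Suc n) = binomial_transform g n + binomial_transform (\<lambda>k. g (Suc k)) n"
proof -
  have "binomial_transform g (Suc n) = g 0 + (\<Sum>k\<le>n. (Suc n choose Suc k) * g (Suc k))"
    unfolding binomial_transform_def by (subst sum.atMost_Suc_shift) simp
  also have "\<dots> = (g 0 + (\<Sum>k\<le>n. (n choose Suc k) * g (Suc k))) + binomial_transform (\<lambda>k. g (Suc k)) n"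
    by (simp add: binomial_transform_def sum.distrib algebra_simps)
  also have "g 0 + (\<Sum>k\<le>n. (n choose Suc k) * g (Suc k)) = (\<Sum>k\<le>Suc n. (n choose k) * g k)"
    by (subst sum.atMost_Suc_shift) simp
  also have "\<dots> = binomial_transform g n"
    by (simp add: binomial_transform_def)
  finally show ?thesis .
qed

lemma sum_binomial_times_index:
  "(\<Sum>k\<le>Suc n. (Suc n choose k) * (k * g k)) = Suc n * binomial_transform (\<lambda>k. g (Suc k)) n"
proof -
  have "(\<Sum>k\<le>Suc n. (Suc n choose k) * (k * g k)) = (\<Sum>k\<le>n. (Suc n choose Suc k) * (Suc k * g (Suc k)))"
    by (subst sum.atMost_Suc_shift) simp
  also have "\<dots> = (\<Sum>k\<le>n. Suc n * ((n choose k) * g (Suc k)))"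
  proof (rule sum.cong)
    fix k
    show "(Suc n choose Suc k) * (Suc k * g (Suc k)) = Suc n * ((n choose k) * g (Suc k))"
      using Suc_times_binomial [of k n] by (metis mult.assoc mult.commute)
  qed simp
  finally show ?thesis by (simp add: binomial_transform_def sum_distrib_left)
qed

lemma sum_binomial_times_index_shift:
  "(\<Sum>k\<le>n. (n choose k) * (k * (g k + g (k - 1)))) = n * binomial_transform g n"
proof (cases n)
  case (Suc m)
  have "(\<Sum>k\<le>n. (n choose k) * (k * (g k + g (k - 1))))
      = (\<Sum>k\<le>Suc m. (Suc m choose k) * (k * g k)) + (\<Sum>k\<le>Suc m. (Suc m choose k) * (k * g (k - 1)))"
    by (simp add: Suc sum.distrib algebra_simps)
  also have "\<dots> = Suc m * binomial_transform (\<lambda>k. g (Suc k)) m + Suc m * binomial_transform g m"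
    by (simp only: sum_binomial_times_index diff_Suc_1)
  finally show ?thesis by (simp add: Suc binomial_transform_Suc algebra_simps)
qed (simp add: binomial_transform_def)

lemma binomial_transform_r_derangement_number_Suc:
  "binomial_transform (r_derangement_number s) (Suc n) =
    (s + n + 1) * binomial_transform (r_derangement_number s) n
    + s * binomial_transform (r_derangement_number (s - 1)) n"
proof -
  let ?D = "r_derangement_number s" and ?D' = "r_derangement_number (s - 1)"
  have "binomial_transform (\<lambda>k. ?D (Suc k)) n
      = (\<Sum>k\<le>n. s * ((n choose k) * ?D k) + s * ((n choose k) * ?D' k)
          + (n choose k) * (k * (?D k + ?D (k - 1))))"
    unfolding binomial_transform_def by (intro sum.cong) (simp_all add: algebra_simps)
  also have "\<dots> = s * binomial_transform ?D n + s * binomial_transform ?D' n + n * binomial_transform ?D n"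
    by (simp only: sum.distrib sum_distrib_left [symmetric] sum_binomial_times_index_shift
        binomial_transform_def)
  finally show ?thesis by (simp add: binomial_transform_Suc algebra_simps)
qed

lemma fact_times_binomial_Suc:
  "fact (Suc n) * (Suc n choose s) =
    (s + n + 1) * (fact n * (n choose s)) + s * (fact n * (n choose (s - 1)) :: nat)"
proof (cases s)
  case (Suc t)
  have "fact (Suc n) * (Suc n choose s) = fact n * (Suc n * (n choose t)) + fact n * (Suc n * (n choose Suc t))"
    by (simp add: Suc algebra_simps)
  also have "Suc n * (n choose t) = Suc t * (n choose t) + Suc t * (n choose Suc t)"
    using Suc_times_binomial [of t n] by (simp add: algebra_simps)
  finally show ?thesis by (simp add: Suc algebra_simps)
qed simp

lemma binomial_transform_r_derangement_number:
  "binomial_transform (r_derangement_number s) n = fact n * (n choose s)"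
proof (induction n arbitrary: s)
  case 0
  then show ?case by (simp add: binomial_transform_def)
next
  case (Suc n)
  then show ?case
    by (simp only: binomial_transform_r_derangement_number_Suc fact_times_binomial_Suc)
qed

lemma D_eq_r_derangement_number: "D r n = r_derangement_number r n"
proof -
  have "card (r_derangements_on {1..r} {r+1..n+r}) = r_derangement_number r n"
    using card_r_derangements_on [of "{1..r}" "{r+1..n+r}"] by auto
  then show ?thesis by (simp add: D_def r_derangements_eq_r_derangements_on)
qed

theorem mainTheorem1:
  fixes r n :: nat
  assumes "n \<ge> r"
  shows "(\<Sum>k=0..n. (n choose k) * D r k) = fact n * (n choose r)"
proof -
  have "(\<Sum>k=0..n. (n choose k) * D r k) = binomial_transform (r_derangement_number r) n"
    by (simp add: binomial_transform_def atLeast0AtMost D_eq_r_derangement_number)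
  then show ?thesis by (simp add: binomial_transform_r_derangement_number)
qed

end
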